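(* Let $G$ be a graph with $n$ vertices and maximum degree $\Delta$, and let $1\leq k\leq n$. (i) If $0\leq \alpha \leq \frac{1}{2}$, then $S_k(A_{\alpha}(G))\geq (1-\alpha) S_k(Q(G))+(2\alpha-1)k\Delta$. (ii) If $\frac{1}{2}\leq \alpha \leq 1$, then $S_k(A_{\alpha}(G))\geq \alpha S_k(Q(G))+(1-2\alpha)S_k(A(G))$. If $G$ is a regular graph, then equality holds in both inequalities.
   Context: All graphs are simple and undirected. $A(G)$ is the adjacency matrix, $D(G)$ the diagonal degree matrix, $Q(G)=D(G)+A(G)$ the signless Laplacian matrix, and $A_{\alpha}(G)=\alpha D(G)+(1-\alpha)A(G)$. For a real symmetric matrix $M$ with eigenvalues $\lambda_1(M)\geq\cdots\geq\lambda_n(M)$, $S_k(M)=\sum_{i=1}^k\lambda_i(M)$. *)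

theory Defs
  imports "Jordan_Normal_Form.Char_Poly"
begin

definition simple_graph :: "nat \<Rightarrow> (nat \<Rightarrow> nat \<Rightarrow> bool) \<Rightarrow> bool" where
  "simple_graph n E \<longleftrightarrow> (\<forall>i<n. \<forall>j<n. E i j \<longleftrightarrow> E j i) \<and> (\<forall>i<n. \<not> E i i)"

definition degree :: "nat \<Rightarrow> (nat \<Rightarrow> nat \<Rightarrow> bool) \<Rightarrow> nat \<Rightarrow> nat" where
  "degree n E i = card {j. j < n \<and> E i j}"

definition max_degree :: "nat \<Rightarrow> (nat \<Rightarrow> nat \<Rightarrow> bool) \<Rightarrow> nat" where
  "max_degree n E = Max (degree n E ` {..<n})"

definition regular :: "nat \<Rightarrow> (nat \<Rightarrow> nat \<Rightarrow> bool) \<Rightarrow> bool" where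
  "regular n E \<longleftrightarrow> (\<exists>r. \<forall>i<n. degree n E i = r)"

definition adj_mat :: "nat \<Rightarrow> (nat \<Rightarrow> nat \<Rightarrow> bool) \<Rightarrow> real mat" where
  "adj_mat n E = mat n n (\<lambda>(i,j). if E i j then 1 else 0)"

definition deg_mat :: "nat \<Rightarrow> (nat \<Rightarrow> nat \<Rightarrow> bool) \<Rightarrow> real mat" where
  "deg_mat n E = mat n n (\<lambda>(i,j). if i = j then real (degree n E i) else 0)"

definition signless_laplacian :: "nat \<Rightarrow> (nat \<Rightarrow> nat \<Rightarrow> bool) \<Rightarrow> real mat" where
  "signless_laplacian n E = deg_mat n E + adj_mat n E"

definition A_alpha :: "real \<Rightarrow> nat \<Rightarrow> (nat \<Rightarrow> nat \<Rightarrow> bool) \<Rightarrow> real mat" where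
  "A_alpha \<alpha> n E = \<alpha> \<cdot>\<^sub>m deg_mat n E + (1 - \<alpha>) \<cdot>\<^sub>m adj_mat n E"

(* Eigenvalues (with multiplicity) of a real matrix, as the real roots of its characteristic
   polynomial, listed in non-increasing order. For a real symmetric matrix these are all
   n eigenvalues lambda_1 >= ... >= lambda_n. *)
definition eigenvalues_desc :: "real mat \<Rightarrow> real list" where
  "eigenvalues_desc M = rev (sorted_list_of_multiset (proots (char_poly M)))"

definition S :: "nat \<Rightarrow> real mat \<Rightarrow> real" where
  "S k M = sum_list (take k (eigenvalues_desc M))"

end

theory Submission
  imports Defs
begin

text \<open>
  Ky Fan's maximum principle: for a real symmetric n x n matrix M, S_k(M) is the maximum of
  tr(U M U^T) over the k x n matrices U with orthonormal rows. It follows from the spectral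
  theorem (by Householder deflation) together with the observation that the squared column
  norms of such a U are weights in [0, 1] summing to k.

  Since A_alpha = (1 - alpha) Q + (2 alpha - 1) D = alpha Q + (1 - 2 alpha) A, evaluating the
  trace at a maximiser U for Q gives S_k(A_alpha) >= (1 - alpha) S_k(Q) + (2 alpha - 1) tr(U D U^T);
  for alpha <= 1/2 the coefficient is nonpositive and tr(U D U^T) <= S_k(D) <= k Delta. The case
  alpha >= 1/2 is the same with A in place of D. For an r-regular graph D = r I, so A_alpha and Q
  are shifts of nonnegative multiples of A, along which S_k is affine.
\<close>

section \<open>Spectral theorem for real symmetric matrices\<close>

lemma conjugate_mult_mat_vec_of_real:
  fixes M :: "real mat" and v :: "complex vec"
  assumes "v \<in> carrier_vec (dim_col M)"
  shows "conjugate (map_mat complex_of_real M *\<^sub>v v) = map_mat complex_of_real M *\<^sub>v conjugate v"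
  using assms by (intro eq_vecI) (auto simp: scalar_prod_def cnj_sum)

lemma real_symmetric_eigenvalue_real:
  fixes M :: "real mat"
  assumes M: "M \<in> carrier_mat n n" and sym: "M\<^sup>T = M"
    and ev: "eigenvalue (map_mat complex_of_real M) a"
  shows "cnj a = a"
proof -
  let ?Mc = "map_mat complex_of_real M"
  from ev obtain v where "eigenvector ?Mc v a" unfolding eigenvalue_def by auto
  hence v: "v \<in> carrier_vec n" and v0: "v \<noteq> 0\<^sub>v n" and Mv: "?Mc *\<^sub>v v = a \<cdot>\<^sub>v v"
    using M unfolding eigenvector_def by auto
  have McT: "?Mc\<^sup>T = ?Mc"
    using arg_cong[OF sym, of "map_mat complex_of_real"] by (simp add: map_mat_transpose)
  have Mv': "?Mc *\<^sub>v conjugate v = cnj a \<cdot>\<^sub>v conjugate v"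
    using conjugate_mult_mat_vec_of_real[of v M] v M by (simp add: Mv conjugate_smult_vec)
  have "a * (conjugate v \<bullet> v) = conjugate v \<bullet> (?Mc *\<^sub>v v)"
    unfolding Mv using v by simp
  also have "\<dots> = (?Mc\<^sup>T *\<^sub>v conjugate v) \<bullet> v"
    using M v by (simp add: transpose_vec_mult_scalar[symmetric, of _ n n])
  also have "\<dots> = cnj a * (conjugate v \<bullet> v)"
    unfolding McT Mv' using v by simp
  finally show ?thesis
    using v0 conjugate_square_eq_0_vec[OF v] conjugate_vec_sprod_comm[OF v v] by auto
qed

lemma real_symmetric_char_poly_splits:
  fixes M :: "real mat"
  assumes M: "M \<in> carrier_mat n n" and sym: "M\<^sup>T = M"
  obtains es where "char_poly M = (\<Prod>e\<leftarrow>es. [:-e, 1:])"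
proof -
  let ?Mc = "map_mat complex_of_real M"
  have Mc: "?Mc \<in> carrier_mat n n" using M by auto
  from char_poly_factorized[OF Mc] obtain as where cp: "char_poly ?Mc = (\<Prod>a\<leftarrow>as. [:- a, 1:])"
    by auto
  have "cnj a = a" if "a \<in> set as" for a
  proof (rule real_symmetric_eigenvalue_real[OF M sym])
    show "eigenvalue ?Mc a"
      unfolding eigenvalue_root_char_poly[OF Mc] cp using linear_poly_root[OF that] .
  qed
  hence as: "as = map (complex_of_real \<circ> Re) as"
    by (intro map_idI[symmetric]) (simp add: complex_eq_iff)
  interpret of_real_poly: map_poly_inj_comm_ring_hom complex_of_real ..
  have "map_poly complex_of_real (char_poly M) = char_poly ?Mc"
    by (rule of_real_hom.char_poly_hom[OF M, symmetric])
  also have "\<dots> = map_poly complex_of_real (\<Prod>e\<leftarrow>map Re as. [:-e, 1:])"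
    by (subst cp, subst as) (simp add: of_real_poly.hom_prod_list o_def)
  finally have "char_poly M = (\<Prod>e\<leftarrow>map Re as. [:-e, 1:])" by simp
  with that show ?thesis .
qed

lemma proots_prod_linear_factors:
  "proots (\<Prod>e\<leftarrow>es. [:-e, 1:]) = mset (es :: 'a :: idom list)"
proof (induction es)
  case (Cons e es)
  have "proots ([:-e, 1:] * (\<Prod>e\<leftarrow>es. [:-e, 1:])) = proots [:-e, 1:] + mset es"
    by (subst proots_mult) (auto simp: prod_list_zero_iff Cons.IH)
  thus ?case by simp
qed simp

definition householder :: "nat \<Rightarrow> real \<Rightarrow> real vec \<Rightarrow> real mat" where
  "householder n c w = mat n n (\<lambda>(i, j). (if i = j then 1 else 0) - c * w $ i * w $ j)"

lemma householder_carrier [simp]: "householder n c w \<in> carrier_mat n n"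
  by (simp add: householder_def)

lemma householder_symmetric: "(householder n c w)\<^sup>T = householder n c w"
  by (rule eq_matI) (auto simp: householder_def)

lemma householder_involution:
  assumes w: "w \<in> carrier_vec n" and c: "c * (w \<bullet> w) = 2"
  shows "householder n c w * householder n c w = 1\<^sub>m n"
proof (rule eq_matI)
  fix i j assume "i < dim_row (1\<^sub>m n)" "j < dim_col (1\<^sub>m n)"
  hence i: "i < n" and j: "j < n" by auto
  let ?d = "\<lambda>i j. if i = j then 1 else 0 :: real"
  have ww: "(\<Sum>l<n. w $ l * w $ l) = w \<bullet> w"
    using w by (simp add: scalar_prod_def lessThan_atLeast0)
  have "(householder n c w * householder n c w) $$ (i, j)
      = (\<Sum>l<n. (?d i l - c * w $ i * w $ l) * (?d l j - c * w $ l * w $ j))"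
    using i j by (auto simp: householder_def scalar_prod_def lessThan_atLeast0 intro!: sum.cong)
  also have "\<dots> = (\<Sum>l<n. ?d i l * ?d l j - ?d i l * (c * w $ l * w $ j)
      - ?d l j * (c * w $ i * w $ l)) + c * w $ i * w $ j * (c * (\<Sum>l<n. w $ l * w $ l))"
    by (simp add: algebra_simps sum_distrib_left sum.distrib sum_subtractf)
  also have "\<dots> = ?d i j - 2 * c * w $ i * w $ j + c * w $ i * w $ j * 2"
    using i j by (simp add: sum_subtractf ww c if_distrib[of "\<lambda>x. x * _"] cong: if_cong)
  finally show "(householder n c w * householder n c w) $$ (i, j) = 1\<^sub>m n $$ (i, j)"
    using i j by simp
qed (auto simp: householder_def)

lemma householder_to_unit_vector:
  fixes u :: "real vec"
  assumes u: "u \<in> carrier_vec n" and uu: "u \<bullet> u = 1" and n: "0 < n" and u0: "0 \<le> u $ 0"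
  obtains H where "H \<in> carrier_mat n n" "H\<^sup>T = H" "H * H = 1\<^sub>m n" "col H 0 = - u"
proof
  \<comment> \<open>reflection in the hyperplane orthogonal to u + e_0, which sends e_0 to -u\<close>
  define w where "w = u + unit_vec n 0"
  define c where "c = 1 / (1 + u $ 0)"
  have w: "w \<in> carrier_vec n" using u by (simp add: w_def)
  have "w \<bullet> w = u \<bullet> u + 2 * u $ 0 + 1"
    using u n by (simp add: w_def add_scalar_prod_distrib scalar_prod_add_distrib[of _ n] comm_scalar_prod[of _ n])
  hence c: "c * (w \<bullet> w) = 2" using u0 by (simp add: uu c_def field_simps)
  show "householder n c w \<in> carrier_mat n n" "(householder n c w)\<^sup>T = householder n c w"
    by (simp_all add: householder_symmetric)
  show "householder n c w * householder n c w = 1\<^sub>m n" by (rule householder_involution[OF w c])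
  have cw0: "c * w $ 0 = 1" using u n u0 by (simp add: w_def c_def)
  have "col (householder n c w) 0 $ i = (if i = 0 then 1 else 0) - (c * w $ 0) * w $ i"
    if "i < n" for i
    using that n by (simp add: householder_def algebra_simps)
  hence "col (householder n c w) 0 $ i = - u $ i" if "i < n" for i
    using that u n unfolding cw0 by (simp add: w_def)
  thus "col (householder n c w) 0 = - u"
    using u by (intro eq_vecI) (auto simp: householder_def)
qed

lemma unit_eigenvector:
  fixes M :: "real mat"
  assumes M: "M \<in> carrier_mat n n" and ev: "eigenvalue M e"
  obtains u where "u \<in> carrier_vec n" "u \<bullet> u = 1" "0 \<le> u $ 0" "M *\<^sub>v u = e \<cdot>\<^sub>v u"
proof -
  from ev obtain v where "eigenvector M v e" unfolding eigenvalue_def by auto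
  hence v: "v \<in> carrier_vec n" and v0: "v \<noteq> 0\<^sub>v n" and Mv: "M *\<^sub>v v = e \<cdot>\<^sub>v v"
    using M unfolding eigenvector_def by auto
  have vv: "0 < v \<bullet> v" using conjugate_square_greater_0_vec[OF v] v0 by simp
  define s where "s = (if 0 \<le> v $ 0 then 1 else -1) / sqrt (v \<bullet> v)"
  have "s * s = 1 / (v \<bullet> v)" using vv by (simp add: s_def)
  hence "(s \<cdot>\<^sub>v v) \<bullet> (s \<cdot>\<^sub>v v) = 1" using v vv by (simp add: mult.assoc[symmetric])
  moreover have "0 \<le> (s \<cdot>\<^sub>v v) $ 0"
  proof (cases "n = 0")
    case False
    thus ?thesis using v vv by (auto simp: s_def divide_simps)
  qed (use v v0 in \<open>auto intro!: eq_vecI\<close>)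
  moreover have "M *\<^sub>v (s \<cdot>\<^sub>v v) = e \<cdot>\<^sub>v (s \<cdot>\<^sub>v v)"
    using M v by (simp add: mult_mat_vec Mv smult_smult_assoc mult.commute)
  ultimately show thesis using that[of "s \<cdot>\<^sub>v v"] v by simp
qed

lemma symmetric_block_of_eigen_col:
  fixes A :: "'a :: comm_ring_1 mat"
  assumes A: "A \<in> carrier_mat (Suc m) (Suc m)" and sym: "A\<^sup>T = A"
    and col: "col A 0 = e \<cdot>\<^sub>v unit_vec (Suc m) 0"
  defines "B \<equiv> mat m m (\<lambda>(i, j). A $$ (Suc i, Suc j))"
  shows "A = four_block_mat (mat 1 1 (\<lambda>_. e)) (0\<^sub>m 1 m) (0\<^sub>m m 1) B" and "B\<^sup>T = B"
proof -
  have col_entry: "A $$ (i, 0) = (if i = 0 then e else 0)" if "i < Suc m" for i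
    using arg_cong[OF col, of "\<lambda>v. v $ i"] that A by auto
  have sym_entry: "A $$ (i, j) = A $$ (j, i)" if "i < Suc m" "j < Suc m" for i j
    using arg_cong[OF sym, of "\<lambda>X. X $$ (j, i)"] that A by auto
  show "A = four_block_mat (mat 1 1 (\<lambda>_. e)) (0\<^sub>m 1 m) (0\<^sub>m m 1) B"
  proof (rule eq_matI)
    fix i j assume "i < dim_row (four_block_mat (mat 1 1 (\<lambda>_. e)) (0\<^sub>m 1 m) (0\<^sub>m m 1) B)"
      and "j < dim_col (four_block_mat (mat 1 1 (\<lambda>_. e)) (0\<^sub>m 1 m) (0\<^sub>m m 1) B)"
    hence i: "i < Suc m" and j: "j < Suc m" by (auto simp: B_def)
    show "A $$ (i, j) = four_block_mat (mat 1 1 (\<lambda>_. e)) (0\<^sub>m 1 m) (0\<^sub>m m 1) B $$ (i, j)"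
      using col_entry[OF i] col_entry[OF j] sym_entry[OF i j] i j by (auto simp: B_def)
  qed (use A in \<open>auto simp: B_def\<close>)
  show "B\<^sup>T = B" by (rule eq_matI) (auto simp: B_def sym_entry)
qed

lemma symmetric_deflation:
  fixes M :: "real mat"
  assumes M: "M \<in> carrier_mat (Suc m) (Suc m)" and sym: "M\<^sup>T = M" and ev: "eigenvalue M e"
  obtains H A where "H \<in> carrier_mat (Suc m) (Suc m)" "H\<^sup>T = H" "H * H = 1\<^sub>m (Suc m)"
    "A \<in> carrier_mat m m" "A\<^sup>T = A"
    "H * M * H = four_block_mat (mat 1 1 (\<lambda>_. e)) (0\<^sub>m 1 m) (0\<^sub>m m 1) A"
proof -
  obtain u where u: "u \<in> carrier_vec (Suc m)" and uu: "u \<bullet> u = 1" and u0: "0 \<le> u $ 0"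
    and Mu: "M *\<^sub>v u = e \<cdot>\<^sub>v u"
    using unit_eigenvector[OF M ev] by blast
  obtain H where H: "H \<in> carrier_mat (Suc m) (Suc m)" and HT: "H\<^sup>T = H"
    and HH: "H * H = 1\<^sub>m (Suc m)" and colH: "col H 0 = - u"
    using householder_to_unit_vector[OF u uu _ u0] by blast
  have minus_u: "X *\<^sub>v (- v) = - (X *\<^sub>v v)"
    if "X \<in> carrier_mat (Suc m) (Suc m)" "v \<in> carrier_vec (Suc m)" for X :: "real mat" and v
    using that by (intro eq_vecI) auto
  have Hu: "H *\<^sub>v u = - unit_vec (Suc m) 0"
  proof -
    have "- (H *\<^sub>v u) = H *\<^sub>v col H 0" using H u by (simp add: colH minus_u)
    also have "\<dots> = col (H * H) 0" using col_mult2[OF H H, of 0] by simp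
    also have "\<dots> = unit_vec (Suc m) 0" by (simp add: HH)
    finally show ?thesis by (metis uminus_uminus_vec)
  qed
  have "col (H * M * H) 0 = (H * M) *\<^sub>v col H 0" using H M by (intro col_mult2) auto
  also have "\<dots> = H *\<^sub>v (M *\<^sub>v - u)" using H M u by (simp add: colH)
  also have "\<dots> = - (e \<cdot>\<^sub>v (H *\<^sub>v u))" using H M u by (simp add: minus_u Mu mult_mat_vec)
  also have "\<dots> = e \<cdot>\<^sub>v unit_vec (Suc m) 0" unfolding Hu by (intro eq_vecI) auto
  finally have col: "col (H * M * H) 0 = e \<cdot>\<^sub>v unit_vec (Suc m) 0" .
  have "(H * M * H)\<^sup>T = H * M * H"
    using H M by (simp add: transpose_mult[of _ "Suc m" "Suc m" _ "Suc m"] HT sym)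
  note block = symmetric_block_of_eigen_col[OF _ this col]
  show ?thesis by (rule that[OF H HT HH _ block(2) block(1)]) (use H M in simp_all)
qed

lemma orthogonal_block_extension:
  fixes P :: "'a :: comm_ring_1 mat"
  assumes P: "P \<in> carrier_mat m m" and PP: "P\<^sup>T * P = 1\<^sub>m m"
    and A1: "A1 \<in> carrier_mat 1 1" and A: "A \<in> carrier_mat m m"
  defines "B \<equiv> four_block_mat (1\<^sub>m 1) (0\<^sub>m 1 m) (0\<^sub>m m 1) P"
  shows "B \<in> carrier_mat (Suc m) (Suc m)" and "B\<^sup>T * B = 1\<^sub>m (Suc m)"
    and "B\<^sup>T * four_block_mat A1 (0\<^sub>m 1 m) (0\<^sub>m m 1) A * B
         = four_block_mat A1 (0\<^sub>m 1 m) (0\<^sub>m m 1) (P\<^sup>T * A * P)"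
proof -
  have BT: "B\<^sup>T = four_block_mat (1\<^sub>m 1) (0\<^sub>m 1 m) (0\<^sub>m m 1) P\<^sup>T"
    unfolding B_def using P by (subst transpose_four_block_mat[of _ 1 1 _ m _ m]) auto
  show "B \<in> carrier_mat (Suc m) (Suc m)"
    using four_block_carrier_mat[OF one_carrier_mat[of 1] P] by (simp add: B_def)
  have "B\<^sup>T * B = four_block_mat (1\<^sub>m 1) (0\<^sub>m 1 m) (0\<^sub>m m 1) (1\<^sub>m m)"
    unfolding BT unfolding B_def using P by (simp add: mult_four_block_mat[of _ 1 1 _ m _ m _ _ 1 _ m] PP)
  also have "\<dots> = 1\<^sub>m (Suc m)" by (rule eq_matI) auto
  finally show "B\<^sup>T * B = 1\<^sub>m (Suc m)" .
  show "B\<^sup>T * four_block_mat A1 (0\<^sub>m 1 m) (0\<^sub>m m 1) A * B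
         = four_block_mat A1 (0\<^sub>m 1 m) (0\<^sub>m m 1) (P\<^sup>T * A * P)"
    unfolding BT unfolding B_def using P A1 A
    by (simp add: mult_four_block_mat[of _ 1 1 _ m _ m _ _ 1 _ m])
qed

lemma char_poly_deflation:
  fixes M :: "'a :: comm_ring_1 mat"
  assumes H: "H \<in> carrier_mat (Suc m) (Suc m)" and M: "M \<in> carrier_mat (Suc m) (Suc m)"
    and HH: "H * H = 1\<^sub>m (Suc m)" and A: "A \<in> carrier_mat m m"
    and HMH: "H * M * H = four_block_mat (mat 1 1 (\<lambda>_. e)) (0\<^sub>m 1 m) (0\<^sub>m m 1) A"
  shows "char_poly M = [:-e, 1:] * char_poly A"
proof -
  have "similar_mat (H * M * H) M"
    unfolding similar_mat_def similar_mat_wit_def using H M HH by (intro exI[of _ H]) auto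
  hence "char_poly M = char_poly (H * M * H)" by (simp add: char_poly_similar)
  also have "\<dots> = char_poly (mat 1 1 (\<lambda>_. e)) * char_poly A"
    unfolding HMH using A by (intro char_poly_four_block_zeros_col) auto
  also have "char_poly (mat 1 1 (\<lambda>_. e)) = [:-e, 1:]"
    by (simp add: char_poly_defs det_def sign_def)
  finally show ?thesis .
qed

lemma symmetric_orthogonal_diagonalization:
  fixes M :: "real mat"
  assumes "M \<in> carrier_mat n n" and "M\<^sup>T = M" and "char_poly M = (\<Prod>e\<leftarrow>es. [:-e, 1:])"
  obtains P where "P \<in> carrier_mat n n" "P\<^sup>T * P = 1\<^sub>m n" "P\<^sup>T * M * P = mat_diag n ((!) es)"
  using assms
proof (induction es arbitrary: n M thesis)
  case Nil
  hence "n = 0" using degree_monic_char_poly[of M n] by simp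
  thus ?case by (intro Nil.prems(1)[of "1\<^sub>m n"]) (auto intro!: eq_matI simp: mat_diag_def)
next
  case (Cons e es)
  have "n = Suc (length es)"
    using degree_monic_char_poly[OF Cons.prems(2)] degree_linear_factors[of uminus "e # es"]
    unfolding Cons.prems(4) by simp
  then obtain m where n: "n = Suc m" and m: "m = length es" by blast
  note M = Cons.prems(2)[unfolded n] and sym = Cons.prems(3)
  have "eigenvalue M e" using M Cons.prems(4) by (simp add: eigenvalue_root_char_poly)
  then obtain H A where H: "H \<in> carrier_mat (Suc m) (Suc m)" and HT: "H\<^sup>T = H"
    and HH: "H * H = 1\<^sub>m (Suc m)" and A: "A \<in> carrier_mat m m" and AT: "A\<^sup>T = A"
    and HMH: "H * M * H = four_block_mat (mat 1 1 (\<lambda>_. e)) (0\<^sub>m 1 m) (0\<^sub>m m 1) A"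
    using symmetric_deflation[OF M sym] by blast
  have "[:-e, 1:] * char_poly A = [:-e, 1:] * (\<Prod>e\<leftarrow>es. [:-e, 1:])"
    using char_poly_deflation[OF H M HH A HMH] Cons.prems(4) by simp
  hence "char_poly A = (\<Prod>e\<leftarrow>es. [:-e, 1:])"
    by (metis mult_cancel_left pCons_eq_0_iff zero_neq_one)
  then obtain Q where Q: "Q \<in> carrier_mat m m" and QQ: "Q\<^sup>T * Q = 1\<^sub>m m"
    and QAQ: "Q\<^sup>T * A * Q = mat_diag m ((!) es)"
    using Cons.IH[OF _ A AT] unfolding m by blast
  define B where "B = four_block_mat (1\<^sub>m 1) (0\<^sub>m 1 m) (0\<^sub>m m 1) Q"
  note B = orthogonal_block_extension[OF Q QQ mat_carrier[of 1 1 "\<lambda>_. e"] A, folded B_def]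
  note assoc = assoc_mult_mat[of _ "Suc m" "Suc m" _ "Suc m" _ "Suc m"]
  show ?case
  proof (rule Cons.prems(1)[of "H * B"])
    show "H * B \<in> carrier_mat n n" using H B n by simp
    have "(H * B)\<^sup>T * (H * B) = B\<^sup>T * (H * H) * B"
      using H B by (simp add: transpose_mult[OF H] HT assoc)
    thus "(H * B)\<^sup>T * (H * B) = 1\<^sub>m n" using B n by (simp add: HH)
    have "(H * B)\<^sup>T * M * (H * B) = B\<^sup>T * (H * M * H) * B"
      using H B M by (simp add: transpose_mult[OF H] HT assoc)
    also have "\<dots> = mat_diag n ((!) (e # es))"
      unfolding HMH B(3) QAQ n by (auto intro!: eq_matI simp: mat_diag_def nth_Cons')
    finally show "(H * B)\<^sup>T * M * (H * B) = mat_diag n ((!) (e # es))" .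
  qed
qed

lemma symmetric_spectral_decomposition:
  fixes M :: "real mat"
  assumes M: "M \<in> carrier_mat n n" and sym: "M\<^sup>T = M"
  obtains P where "P \<in> carrier_mat n n" "P\<^sup>T * P = 1\<^sub>m n"
    "P\<^sup>T * M * P = mat_diag n ((!) (eigenvalues_desc M))"
    "length (eigenvalues_desc M) = n" "sorted_wrt (\<ge>) (eigenvalues_desc M)"
proof -
  obtain es where cp: "char_poly M = (\<Prod>e\<leftarrow>es. [:-e, 1:])"
    using real_symmetric_char_poly_splits[OF M sym] .
  have desc: "eigenvalues_desc M = rev (sort es)"
    by (simp add: eigenvalues_desc_def cp proots_prod_linear_factors)
  have "char_poly M = (\<Prod>e\<leftarrow>eigenvalues_desc M. [:-e, 1:])"
    unfolding cp by (simp flip: prod_mset_prod_list add: desc)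
  then obtain P where "P \<in> carrier_mat n n" "P\<^sup>T * P = 1\<^sub>m n"
    "P\<^sup>T * M * P = mat_diag n ((!) (eigenvalues_desc M))"
    using symmetric_orthogonal_diagonalization[OF M sym] by blast
  moreover have "length (eigenvalues_desc M) = n"
    using degree_monic_char_poly[OF M] degree_linear_factors[of uminus es]
    by (simp add: desc cp)
  moreover have "sorted_wrt (\<ge>) (eigenvalues_desc M)" by (simp add: desc sorted_wrt_rev)
  ultimately show thesis using that by blast
qed

section \<open>Ky Fan's maximum principle\<close>

lemma S_eq_sum_eigenvalues:
  assumes "length (eigenvalues_desc M) = n" and "k \<le> n"
  shows "S k M = (\<Sum>i<k. eigenvalues_desc M ! i)"
  using assms by (simp add: S_def sum_list_sum_nth lessThan_atLeast0 min_absorb1)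

lemma weighted_sum_le_sum_top:
  fixes \<mu> w :: "nat \<Rightarrow> real"
  assumes mono: "\<And>i j. i \<le> j \<Longrightarrow> j < n \<Longrightarrow> \<mu> j \<le> \<mu> i"
    and w0: "\<And>i. i < n \<Longrightarrow> 0 \<le> w i" and w1: "\<And>i. i < n \<Longrightarrow> w i \<le> 1"
    and sum_w: "(\<Sum>i<n. w i) = real k" and kn: "k \<le> n"
  shows "(\<Sum>i<n. \<mu> i * w i) \<le> (\<Sum>i<k. \<mu> i)"
proof -
  \<comment> \<open>c separates the k largest values from the others: a unit of weight missing from the
    top k costs at least c, a unit of weight outside them gains at most c\<close>
  define c where "c = \<mu> (k - 1)"
  have split: "(\<Sum>i<n. f i) = (\<Sum>i<k. f i) + (\<Sum>i\<in>{k..<n}. f i)" for f :: "nat \<Rightarrow> real"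
    using kn by (metis atLeast0LessThan sum.atLeastLessThan_concat zero_le)
  have top: "\<mu> i * w i \<le> \<mu> i - c * (1 - w i)" if "i < k" for i
  proof -
    have "c * (1 - w i) \<le> \<mu> i * (1 - w i)"
      using mono[of i "k - 1"] w1[of i] that kn by (intro mult_right_mono) (auto simp: c_def)
    thus ?thesis by (simp add: algebra_simps)
  qed
  have rest: "\<mu> i * w i \<le> c * w i" if "i \<in> {k..<n}" for i
    using mono[of "k - 1" i] w0[of i] that by (intro mult_right_mono) (auto simp: c_def)
  have "(\<Sum>i<n. \<mu> i * w i) \<le> (\<Sum>i<k. \<mu> i - c * (1 - w i)) + (\<Sum>i\<in>{k..<n}. c * w i)"
    unfolding split[of "\<lambda>i. \<mu> i * w i"] by (intro add_mono sum_mono top rest) auto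
  also have "\<dots> = (\<Sum>i<k. \<mu> i) - c * (real k - (\<Sum>i<n. w i))"
    unfolding split[of w] by (simp add: sum_subtractf sum_distrib_left sum.distrib algebra_simps)
  finally show ?thesis by (simp add: sum_w)
qed

definition orthonormal_rows :: "nat \<Rightarrow> nat \<Rightarrow> real mat \<Rightarrow> bool" where
  "orthonormal_rows k n U \<longleftrightarrow> U \<in> carrier_mat k n \<and> U * U\<^sup>T = 1\<^sub>m k"

text \<open>The trace of U X U^T for a k x n matrix U, written out so that it needs no dimension facts.\<close>
definition compression_trace :: "nat \<Rightarrow> nat \<Rightarrow> real mat \<Rightarrow> real mat \<Rightarrow> real" where
  "compression_trace k n U X = (\<Sum>j<k. \<Sum>a<n. \<Sum>b<n. U $$ (j, a) * X $$ (a, b) * U $$ (j, b))"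

lemma compression_trace_eq_trace:
  assumes U: "U \<in> carrier_mat r n" and X: "X \<in> carrier_mat n n" and k: "k \<le> r"
  shows "compression_trace k n U X = (\<Sum>j<k. (U * X * U\<^sup>T) $$ (j, j))"
  unfolding compression_trace_def
proof (rule sum.cong[OF refl])
  fix j assume "j \<in> {..<k}"
  hence j: "j < r" using k by simp
  have "(U * X * U\<^sup>T) $$ (j, j) = (\<Sum>a<n. U $$ (j, a) * (\<Sum>b<n. X $$ (a, b) * U $$ (j, b)))"
    using U X j by (simp add: scalar_prod_def lessThan_atLeast0)
  also have "\<dots> = (\<Sum>a<n. \<Sum>b<n. U $$ (j, a) * X $$ (a, b) * U $$ (j, b))"
    by (simp add: sum_distrib_left mult.assoc)
  finally show "(\<Sum>a<n. \<Sum>b<n. U $$ (j, a) * X $$ (a, b) * U $$ (j, b)) = (U * X * U\<^sup>T) $$ (j, j)" ..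
qed

lemma compression_trace_linear:
  assumes "Y \<in> carrier_mat n n" and "Z \<in> carrier_mat n n"
  shows "compression_trace k n U (p \<cdot>\<^sub>m Y + q \<cdot>\<^sub>m Z)
    = p * compression_trace k n U Y + q * compression_trace k n U Z"
proof -
  have "compression_trace k n U (p \<cdot>\<^sub>m Y + q \<cdot>\<^sub>m Z) = (\<Sum>j<k. \<Sum>a<n. \<Sum>b<n.
      p * (U $$ (j, a) * Y $$ (a, b) * U $$ (j, b)) + q * (U $$ (j, a) * Z $$ (a, b) * U $$ (j, b)))"
    unfolding compression_trace_def using assms by (intro sum.cong refl) (simp add: algebra_simps)
  thus ?thesis by (simp add: compression_trace_def sum.distrib sum_distrib_left)
qed

lemma compression_trace_mat_diag:
  "compression_trace k n U (mat_diag n d) = (\<Sum>a<n. d a * (\<Sum>j<k. (U $$ (j, a))\<^sup>2))"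
proof -
  have "(\<Sum>b<n. U $$ (j, a) * mat_diag n d $$ (a, b) * U $$ (j, b)) = d a * (U $$ (j, a))\<^sup>2"
    if "a < n" for j a
  proof -
    have "(\<Sum>b<n. U $$ (j, a) * mat_diag n d $$ (a, b) * U $$ (j, b))
        = (\<Sum>b<n. if b = a then d a * (U $$ (j, a))\<^sup>2 else 0)"
      using that by (intro sum.cong) (auto simp: mat_diag_def power2_eq_square)
    thus ?thesis using that by simp
  qed
  hence "compression_trace k n U (mat_diag n d) = (\<Sum>j<k. \<Sum>a<n. d a * (U $$ (j, a))\<^sup>2)"
    unfolding compression_trace_def by (intro sum.cong refl) auto
  thus ?thesis by (simp add: sum.swap[of _ "{..<k}"] sum_distrib_left)
qed

lemma orthonormal_rows_row_norm:
  assumes "orthonormal_rows k n U" and j: "j < k"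
  shows "(\<Sum>a<n. (U $$ (j, a))\<^sup>2) = 1"
proof -
  have U: "U \<in> carrier_mat k n" and UU: "U * U\<^sup>T = 1\<^sub>m k"
    using assms(1) by (auto simp: orthonormal_rows_def)
  have "(\<Sum>a<n. (U $$ (j, a))\<^sup>2) = (U * U\<^sup>T) $$ (j, j)"
    using U j by (simp add: scalar_prod_def lessThan_atLeast0 power2_eq_square)
  thus ?thesis using j by (simp add: UU)
qed

lemma orthonormal_rows_total_weight:
  assumes "orthonormal_rows k n U"
  shows "(\<Sum>a<n. \<Sum>j<k. (U $$ (j, a))\<^sup>2) = real k"
proof -
  have "(\<Sum>a<n. \<Sum>j<k. (U $$ (j, a))\<^sup>2) = (\<Sum>j<k. \<Sum>a<n. (U $$ (j, a))\<^sup>2)"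
    by (rule sum.swap)
  also have "\<dots> = (\<Sum>j<k. 1)" by (intro sum.cong refl orthonormal_rows_row_norm[OF assms]) simp
  finally show ?thesis by simp
qed

lemma orthonormal_rows_col_weight_le_1:
  assumes U: "orthonormal_rows k n U" and a: "a < n"
  shows "(\<Sum>j<k. (U $$ (j, a))\<^sup>2) \<le> 1"
proof -
  \<comment> \<open>U^T U is a symmetric idempotent, so each diagonal entry w satisfies w^2 <= w\<close>
  define X where "X = U\<^sup>T * U"
  have Uc: "U \<in> carrier_mat k n" and UU: "U * U\<^sup>T = 1\<^sub>m k"
    using U by (auto simp: orthonormal_rows_def)
  have "X * X = U\<^sup>T * (U * U\<^sup>T) * U"
    using Uc by (simp add: X_def assoc_mult_mat[of _ n k _ n _ n] assoc_mult_mat[of _ k n _ k _ n]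
      assoc_mult_mat[of _ n k _ k _ n])
  hence XX: "X * X = X" using Uc by (simp add: UU X_def)
  have X_entry: "X $$ (a, b) = (\<Sum>j<k. U $$ (j, a) * U $$ (j, b))" if "a < n" "b < n" for a b
    using Uc that by (simp add: X_def scalar_prod_def lessThan_atLeast0)
  define w where "w = (\<Sum>j<k. (U $$ (j, a))\<^sup>2)"
  have "w = (X * X) $$ (a, a)" using a X_entry[OF a a] by (simp add: XX w_def power2_eq_square)
  also have "\<dots> = (\<Sum>b<n. (X $$ (a, b))\<^sup>2)"
    using Uc a by (simp add: X_def scalar_prod_def lessThan_atLeast0 power2_eq_square mult.commute)
  also have "\<dots> \<ge> (X $$ (a, a))\<^sup>2" using a by (intro member_le_sum) auto
  finally have "w\<^sup>2 \<le> w" using a X_entry[OF a a] by (simp add: w_def power2_eq_square)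
  thus ?thesis unfolding w_def[symmetric] by (cases "0 < w") (auto simp: power2_eq_square mult_le_cancel_left1)
qed

lemma orthonormal_rows_mult_orthogonal:
  assumes U: "orthonormal_rows k n U" and P: "P \<in> carrier_mat n n" and PP: "P * P\<^sup>T = 1\<^sub>m n"
  shows "orthonormal_rows k n (U * P)"
proof -
  have Uc: "U \<in> carrier_mat k n" and UU: "U * U\<^sup>T = 1\<^sub>m k"
    using U by (auto simp: orthonormal_rows_def)
  have "U * P * (U * P)\<^sup>T = U * (P * P\<^sup>T) * U\<^sup>T"
    using Uc P by (simp add: transpose_mult[OF Uc P] assoc_mult_mat[of _ k n _ n _ k]
      assoc_mult_mat[of _ n n _ n _ k])
  thus ?thesis using Uc P by (simp add: orthonormal_rows_def PP UU)
qed

lemma compression_trace_orthogonal_conj: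
  assumes U: "U \<in> carrier_mat k n" and P: "P \<in> carrier_mat n n" and D: "D \<in> carrier_mat n n"
  shows "compression_trace k n U (P * D * P\<^sup>T) = compression_trace k n (U * P) D"
proof -
  have "U * (P * D * P\<^sup>T) * U\<^sup>T = (U * P) * D * (U * P)\<^sup>T"
    using U P D by (simp add: transpose_mult[OF U P] assoc_mult_mat[of _ k n _ n _ k]
      assoc_mult_mat[of _ n n _ n _ k] assoc_mult_mat[of _ n n _ n _ n] assoc_mult_mat[of _ k n _ n _ n])
  thus ?thesis using U P D by (simp add: compression_trace_eq_trace[of _ k])
qed

lemma compression_trace_le_S:
  fixes M :: "real mat"
  assumes M: "M \<in> carrier_mat n n" and sym: "M\<^sup>T = M"
    and U: "orthonormal_rows k n U" and kn: "k \<le> n"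
  shows "compression_trace k n U M \<le> S k M"
proof -
  obtain P where P: "P \<in> carrier_mat n n" and PP: "P\<^sup>T * P = 1\<^sub>m n"
    and PMP: "P\<^sup>T * M * P = mat_diag n ((!) (eigenvalues_desc M))"
    and len: "length (eigenvalues_desc M) = n" and sorted: "sorted_wrt (\<ge>) (eigenvalues_desc M)"
    using symmetric_spectral_decomposition[OF M sym] by blast
  let ?\<mu> = "(!) (eigenvalues_desc M)" and ?D = "mat_diag n ((!) (eigenvalues_desc M))"
  have PP': "P * P\<^sup>T = 1\<^sub>m n" using mat_mult_left_right_inverse[OF _ P PP] P by simp
  have "P * ?D * P\<^sup>T = (P * P\<^sup>T) * M * (P * P\<^sup>T)"
    unfolding PMP[symmetric] using P M by (simp add: assoc_mult_mat[of _ n n _ n _ n])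
  hence M_eq: "M = P * ?D * P\<^sup>T" using M by (simp add: PP')
  define w where "w a = (\<Sum>j<k. ((U * P) $$ (j, a))\<^sup>2)" for a
  have UP: "orthonormal_rows k n (U * P)" by (rule orthonormal_rows_mult_orthogonal[OF U P PP'])
  have "compression_trace k n U M = compression_trace k n U (P * ?D * P\<^sup>T)"
    using arg_cong[OF M_eq, of "compression_trace k n U"] .
  also have "\<dots> = compression_trace k n (U * P) ?D"
    using U P by (intro compression_trace_orthogonal_conj) (auto simp: orthonormal_rows_def)
  also have "\<dots> = (\<Sum>a<n. ?\<mu> a * w a)" by (simp add: compression_trace_mat_diag w_def)
  also have "\<dots> \<le> (\<Sum>i<k. ?\<mu> i)"
  proof (rule weighted_sum_le_sum_top[OF _ _ _ _ kn])
    show "?\<mu> j \<le> ?\<mu> i" if "i \<le> j" "j < n" for i j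
      using that sorted len by (cases "i = j") (auto simp: sorted_wrt_iff_nth_less)
    show "0 \<le> w a" for a by (simp add: w_def sum_nonneg)
    show "w a \<le> 1" if "a < n" for a
      unfolding w_def by (rule orthonormal_rows_col_weight_le_1[OF UP that])
    show "(\<Sum>a<n. w a) = real k" unfolding w_def by (rule orthonormal_rows_total_weight[OF UP])
  qed
  also have "\<dots> = S k M" using len kn by (simp add: S_eq_sum_eigenvalues)
  finally show ?thesis .
qed

lemma S_eq_compression_trace:
  fixes M :: "real mat"
  assumes M: "M \<in> carrier_mat n n" and sym: "M\<^sup>T = M" and kn: "k \<le> n"
  obtains U where "orthonormal_rows k n U" "compression_trace k n U M = S k M"
proof -
  obtain P where P: "P \<in> carrier_mat n n" and PP: "P\<^sup>T * P = 1\<^sub>m n"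
    and PMP: "P\<^sup>T * M * P = mat_diag n ((!) (eigenvalues_desc M))"
    and len: "length (eigenvalues_desc M) = n"
    using symmetric_spectral_decomposition[OF M sym] by blast
  \<comment> \<open>the first k eigenvectors, as rows\<close>
  define U where "U = mat k n (\<lambda>(j, a). P $$ (a, j))"
  have "U * U\<^sup>T = 1\<^sub>m k"
  proof (rule eq_matI)
    fix i j assume "i < dim_row (1\<^sub>m k)" "j < dim_col (1\<^sub>m k)"
    hence ij: "i < k" "j < k" by auto
    have "(U * U\<^sup>T) $$ (i, j) = (P\<^sup>T * P) $$ (i, j)"
      using ij kn P by (auto simp: U_def scalar_prod_def)
    thus "(U * U\<^sup>T) $$ (i, j) = 1\<^sub>m k $$ (i, j)" using ij kn by (simp add: PP)
  qed (auto simp: U_def)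
  hence U: "orthonormal_rows k n U" by (simp add: orthonormal_rows_def U_def)
  have "compression_trace k n U M = compression_trace k n P\<^sup>T M"
    using kn P unfolding compression_trace_def by (intro sum.cong refl) (auto simp: U_def)
  also have "\<dots> = (\<Sum>j<k. (P\<^sup>T * M * P) $$ (j, j))"
    using P M kn by (simp add: compression_trace_eq_trace[of _ n])
  also have "\<dots> = S k M" using kn len by (simp add: PMP mat_diag_def S_eq_sum_eigenvalues)
  finally show thesis using that U by blast
qed

lemma compression_trace_one:
  assumes "orthonormal_rows k n U"
  shows "compression_trace k n U (1\<^sub>m n) = real k"
  using orthonormal_rows_total_weight[OF assms]
  by (simp add: mat_diag_one[symmetric] compression_trace_mat_diag del: mat_diag_one)

lemma S_ge_combination:
  fixes Y Z :: "real mat"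
  assumes Y: "Y \<in> carrier_mat n n" "Y\<^sup>T = Y" and Z: "Z \<in> carrier_mat n n" "Z\<^sup>T = Z"
    and q: "q \<le> 0" and kn: "k \<le> n"
  shows "p * S k Y + q * S k Z \<le> S k (p \<cdot>\<^sub>m Y + q \<cdot>\<^sub>m Z)"
proof -
  \<comment> \<open>evaluate the Ky Fan functional at a maximiser for Y\<close>
  let ?X = "p \<cdot>\<^sub>m Y + q \<cdot>\<^sub>m Z"
  have X: "?X \<in> carrier_mat n n" using Y Z by simp
  have "?X\<^sup>T = p \<cdot>\<^sub>m Y\<^sup>T + q \<cdot>\<^sub>m Z\<^sup>T" using Y(1) Z(1) by (intro eq_matI) auto
  hence XT: "?X\<^sup>T = ?X" using Y Z by simp
  obtain U where U: "orthonormal_rows k n U" and TY: "compression_trace k n U Y = S k Y"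
    using S_eq_compression_trace[OF Y kn] .
  have "q * S k Z \<le> q * compression_trace k n U Z"
    using compression_trace_le_S[OF Z U kn] q by (rule mult_left_mono_neg)
  hence "p * S k Y + q * S k Z \<le> p * S k Y + q * compression_trace k n U Z" by simp
  also have "\<dots> = compression_trace k n U ?X"
    using Y Z by (simp add: compression_trace_linear TY)
  also have "\<dots> \<le> S k ?X" by (rule compression_trace_le_S[OF X XT U kn])
  finally show ?thesis .
qed

lemma S_mat_diag_le:
  assumes d: "\<And>a. a < n \<Longrightarrow> d a \<le> c" and kn: "k \<le> n"
  shows "S k (mat_diag n d) \<le> real k * c"
proof -
  have "(mat_diag n d)\<^sup>T = mat_diag n d" by (intro eq_matI) (auto simp: mat_diag_def)
  then obtain U where U: "orthonormal_rows k n U"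
    and TD: "compression_trace k n U (mat_diag n d) = S k (mat_diag n d)"
    using S_eq_compression_trace[OF mat_diag_dim _ kn] by blast
  have "compression_trace k n U (mat_diag n d) \<le> (\<Sum>a<n. c * (\<Sum>j<k. (U $$ (j, a))\<^sup>2))"
    unfolding compression_trace_mat_diag by (intro sum_mono mult_right_mono d sum_nonneg) auto
  also have "\<dots> = real k * c"
    by (simp add: sum_distrib_left[symmetric] orthonormal_rows_total_weight[OF U])
  finally show ?thesis by (simp add: TD)
qed

lemma S_shift:
  fixes Y :: "real mat"
  assumes Y: "Y \<in> carrier_mat n n" "Y\<^sup>T = Y" and d: "0 \<le> d" and kn: "k \<le> n"
  shows "S k (c \<cdot>\<^sub>m 1\<^sub>m n + d \<cdot>\<^sub>m Y) = real k * c + d * S k Y"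
proof -
  let ?X = "c \<cdot>\<^sub>m 1\<^sub>m n + d \<cdot>\<^sub>m Y"
  have X: "?X \<in> carrier_mat n n" using Y by simp
  have "?X\<^sup>T = c \<cdot>\<^sub>m 1\<^sub>m n + d \<cdot>\<^sub>m Y\<^sup>T" using Y(1) by (intro eq_matI) auto
  hence XT: "?X\<^sup>T = ?X" using Y by simp
  have TX: "compression_trace k n U ?X = real k * c + d * compression_trace k n U Y"
    if "orthonormal_rows k n U" for U
    using Y that by (simp add: compression_trace_linear compression_trace_one)
  obtain U where U: "orthonormal_rows k n U" and "compression_trace k n U ?X = S k ?X"
    using S_eq_compression_trace[OF X XT kn] .
  hence "S k ?X \<le> real k * c + d * S k Y"
    using mult_left_mono[OF compression_trace_le_S[OF Y U kn] d] by (simp add: TX)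
  moreover obtain V where V: "orthonormal_rows k n V" and "compression_trace k n V Y = S k Y"
    using S_eq_compression_trace[OF Y kn] .
  hence "real k * c + d * S k Y \<le> S k ?X"
    using compression_trace_le_S[OF X XT V kn] by (simp add: TX)
  ultimately show ?thesis by simp
qed

section \<open>Matrices of a graph\<close>

lemma adj_mat_carrier [simp]: "adj_mat n E \<in> carrier_mat n n"
  by (simp add: adj_mat_def)

lemma deg_mat_carrier [simp]: "deg_mat n E \<in> carrier_mat n n"
  by (simp add: deg_mat_def)

lemma signless_laplacian_carrier [simp]: "signless_laplacian n E \<in> carrier_mat n n"
  by (simp add: signless_laplacian_def)

lemma adj_mat_symmetric:
  assumes "simple_graph n E"
  shows "(adj_mat n E)\<^sup>T = adj_mat n E"
  using assms by (intro eq_matI) (auto simp: adj_mat_def simple_graph_def)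

lemma deg_mat_symmetric: "(deg_mat n E)\<^sup>T = deg_mat n E"
  by (intro eq_matI) (auto simp: deg_mat_def)

lemma signless_laplacian_symmetric:
  assumes "simple_graph n E"
  shows "(signless_laplacian n E)\<^sup>T = signless_laplacian n E"
  using assms
  by (intro eq_matI) (auto simp: signless_laplacian_def adj_mat_def deg_mat_def simple_graph_def)

lemma deg_mat_eq_mat_diag: "deg_mat n E = mat_diag n (\<lambda>i. real (degree n E i))"
  by (intro eq_matI) (auto simp: deg_mat_def mat_diag_def)

lemma degree_le_max_degree:
  assumes "i < n"
  shows "degree n E i \<le> max_degree n E"
  using assms by (simp add: max_degree_def)

lemma A_alpha_eq_signless_laplacian_deg_mat:
  "A_alpha \<alpha> n E = (1 - \<alpha>) \<cdot>\<^sub>m signless_laplacian n E + (2 * \<alpha> - 1) \<cdot>\<^sub>m deg_mat n E"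
  by (intro eq_matI)
    (auto simp: A_alpha_def signless_laplacian_def adj_mat_def deg_mat_def algebra_simps)

lemma A_alpha_eq_signless_laplacian_adj_mat:
  "A_alpha \<alpha> n E = \<alpha> \<cdot>\<^sub>m signless_laplacian n E + (1 - 2 * \<alpha>) \<cdot>\<^sub>m adj_mat n E"
  by (intro eq_matI)
    (auto simp: A_alpha_def signless_laplacian_def adj_mat_def deg_mat_def algebra_simps)

lemma regular_graph_matrices:
  assumes "regular n E" and "0 < n"
  obtains r where "max_degree n E = r"
    "signless_laplacian n E = real r \<cdot>\<^sub>m 1\<^sub>m n + 1 \<cdot>\<^sub>m adj_mat n E"
    "A_alpha \<alpha> n E = (\<alpha> * real r) \<cdot>\<^sub>m 1\<^sub>m n + (1 - \<alpha>) \<cdot>\<^sub>m adj_mat n E"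
proof -
  obtain r where r: "\<And>i. i < n \<Longrightarrow> degree n E i = r"
    using assms(1) unfolding regular_def by blast
  have "degree n E ` {..<n} = {r}" using r assms(2) by force
  hence "max_degree n E = r" by (simp add: max_degree_def)
  moreover have "signless_laplacian n E = real r \<cdot>\<^sub>m 1\<^sub>m n + 1 \<cdot>\<^sub>m adj_mat n E"
    by (intro eq_matI) (auto simp: signless_laplacian_def deg_mat_def adj_mat_def r)
  moreover have "A_alpha \<alpha> n E = (\<alpha> * real r) \<cdot>\<^sub>m 1\<^sub>m n + (1 - \<alpha>) \<cdot>\<^sub>m adj_mat n E"
    by (intro eq_matI) (auto simp: A_alpha_def deg_mat_def adj_mat_def r)
  ultimately show thesis using that by blast
qed

lemma S_A_alpha_ge_max_degree_bound:
  assumes G: "simple_graph n E" and \<alpha>: "\<alpha> \<le> 1/2" and kn: "k \<le> n"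
  shows "(1 - \<alpha>) * S k (signless_laplacian n E) + (2 * \<alpha> - 1) * real k * real (max_degree n E)
    \<le> S k (A_alpha \<alpha> n E)"
proof -
  have "S k (deg_mat n E) \<le> real k * real (max_degree n E)"
    unfolding deg_mat_eq_mat_diag using kn by (intro S_mat_diag_le) (simp_all add: degree_le_max_degree)
  hence "(2 * \<alpha> - 1) * (real k * real (max_degree n E)) \<le> (2 * \<alpha> - 1) * S k (deg_mat n E)"
    using \<alpha> by (intro mult_left_mono_neg) auto
  moreover have "(1 - \<alpha>) * S k (signless_laplacian n E) + (2 * \<alpha> - 1) * S k (deg_mat n E)
      \<le> S k (A_alpha \<alpha> n E)"
    unfolding A_alpha_eq_signless_laplacian_deg_mat using G \<alpha> kn
    by (intro S_ge_combination) (simp_all add: signless_laplacian_symmetric deg_mat_symmetric)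
  ultimately show ?thesis by simp
qed

lemma S_A_alpha_ge_adj_mat_bound:
  assumes "simple_graph n E" and "1/2 \<le> \<alpha>" and "k \<le> n"
  shows "\<alpha> * S k (signless_laplacian n E) + (1 - 2 * \<alpha>) * S k (adj_mat n E) \<le> S k (A_alpha \<alpha> n E)"
  unfolding A_alpha_eq_signless_laplacian_adj_mat using assms
  by (intro S_ge_combination) (simp_all add: signless_laplacian_symmetric adj_mat_symmetric)

lemma regular_S_A_alpha:
  assumes G: "simple_graph n E" and reg: "regular n E" and \<alpha>: "\<alpha> \<le> 1" and k: "0 < k" "k \<le> n"
  shows "S k (A_alpha \<alpha> n E)
      = (1 - \<alpha>) * S k (signless_laplacian n E) + (2 * \<alpha> - 1) * real k * real (max_degree n E)"
    and "S k (A_alpha \<alpha> n E) = \<alpha> * S k (signless_laplacian n E) + (1 - 2 * \<alpha>) * S k (adj_mat n E)"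
proof -
  obtain r where "max_degree n E = r"
    "signless_laplacian n E = real r \<cdot>\<^sub>m 1\<^sub>m n + 1 \<cdot>\<^sub>m adj_mat n E"
    "A_alpha \<alpha> n E = (\<alpha> * real r) \<cdot>\<^sub>m 1\<^sub>m n + (1 - \<alpha>) \<cdot>\<^sub>m adj_mat n E"
    using regular_graph_matrices[OF reg] k by auto
  thus "S k (A_alpha \<alpha> n E)
      = (1 - \<alpha>) * S k (signless_laplacian n E) + (2 * \<alpha> - 1) * real k * real (max_degree n E)"
    and "S k (A_alpha \<alpha> n E) = \<alpha> * S k (signless_laplacian n E) + (1 - 2 * \<alpha>) * S k (adj_mat n E)"
    using G \<alpha> k by (simp_all add: S_shift adj_mat_symmetric algebra_simps)
qed

theorem theorem5p1:
  fixes n k :: nat and E :: "nat \<Rightarrow> nat \<Rightarrow> bool" and \<alpha> :: real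
  assumes "simple_graph n E" and "1 \<le> k" and "k \<le> n"
  shows "(0 \<le> \<alpha> \<and> \<alpha> \<le> 1/2 \<longrightarrow>
            S k (A_alpha \<alpha> n E) \<ge> (1 - \<alpha>) * S k (signless_laplacian n E)
                                    + (2*\<alpha> - 1) * real k * real (max_degree n E))
       \<and> (1/2 \<le> \<alpha> \<and> \<alpha> \<le> 1 \<longrightarrow>
            S k (A_alpha \<alpha> n E) \<ge> \<alpha> * S k (signless_laplacian n E)
                                    + (1 - 2*\<alpha>) * S k (adj_mat n E))
       \<and> (regular n E \<longrightarrow>
            (0 \<le> \<alpha> \<and> \<alpha> \<le> 1/2 \<longrightarrow>
               S k (A_alpha \<alpha> n E) = (1 - \<alpha>) * S k (signless_laplacian n E)
                                    + (2*\<alpha> - 1) * real k * real (max_degree n E))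
          \<and> (1/2 \<le> \<alpha> \<and> \<alpha> \<le> 1 \<longrightarrow>
               S k (A_alpha \<alpha> n E) = \<alpha> * S k (signless_laplacian n E)
                                    + (1 - 2*\<alpha>) * S k (adj_mat n E)))"
  using S_A_alpha_ge_max_degree_bound[OF assms(1) _ assms(3)]
    S_A_alpha_ge_adj_mat_bound[OF assms(1) _ assms(3)]
    regular_S_A_alpha[OF assms(1) _ _ _ assms(3)] assms(2)
  by auto

end
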